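(* Let $I$ be a conserved interval of $\mathcal{P}$ with maximal frontier set $F_I=\{f_1<f_2<\cdots<f_k\}$, and let $(a..c)\subseteq I$ be a conserved interval. Then exactly one of the following holds: (1) some $f_l$ lies in $(a..c)$, and then there exist $i\leq j$ such that $(a..c)=(f_i..f_j)$; (2) $(a..c)$ contains no element of $F_I$, and then there exists $i$ such that $f_i<a\leq c<f_{i+1}$.
   Context: Let $n\geq 2$ and let $\mathcal{P}=\{P_1,\ldots,P_K\}$ be signed permutations of $\{1,\ldots,n\}$: each $P_k$ is an ordering of $1,\ldots,n$ in which each element carries a sign $+$ or $-$. Assume $P_1=(+1,+2,\ldots,+n)$ and that every $P_k$ has first element $+1$ and last element $+n$. For integers $i\leq j$ write $(i..j)=\{i,\ldots,j\}$. A conserved interval of $\mathcal{P}$ is either a singleton, or a set $(a..c)$ with $a<c$ which (ignoring signs) occupies consecutive positions in every $P_k$ and which, in every $P_k$, has either $+a$ at its left end and $+c$ at its right end, or $-c$ at its left end and $-a$ at its right end. For a conserved interval $I=(a..c)$, a set $\{f_1,\ldots,f_k\}$ with $a=f_1<\cdots<f_k=c$ is a set of frontiers of $I$ if $(f_i..f_j)$ is conserved for all $1\leq i<j\leq k$; $F_I$ denotes the unique inclusion-maximal set of frontiers of $I$ (the union of all sets of frontiers of $I$). *)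

theory Defs
  imports Main
begin

definition signed_perm :: "nat \<Rightarrow> int list \<Rightarrow> bool" where
  "signed_perm n P \<longleftrightarrow> length P = n \<and> distinct (map abs P) \<and> set (map abs P) = {1..int n}"

definition conserved_in :: "int list \<Rightarrow> int \<Rightarrow> int \<Rightarrow> bool" where
  "conserved_in P a c \<longleftrightarrow>
     (\<exists>p. p + nat (c - a) < length P
        \<and> abs ` set (take (nat (c - a) + 1) (drop p P)) = {a..c}
        \<and> ((P ! p = a \<and> P ! (p + nat (c - a)) = c)
           \<or> (P ! p = - c \<and> P ! (p + nat (c - a)) = - a)))"

definition conserved :: "int list list \<Rightarrow> nat \<Rightarrow> int \<Rightarrow> int \<Rightarrow> bool" where
  "conserved Ps n a c \<longleftrightarrow>
     (a = c \<and> 1 \<le> a \<and> a \<le> int n) \<or> (a < c \<and> (\<forall>P\<in>set Ps. conserved_in P a c))"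

definition frontier_set :: "int list list \<Rightarrow> nat \<Rightarrow> int \<Rightarrow> int \<Rightarrow> int set \<Rightarrow> bool" where
  "frontier_set Ps n a c F \<longleftrightarrow> finite F \<and> F \<subseteq> {a..c} \<and> a \<in> F \<and> c \<in> F
     \<and> (\<forall>f\<in>F. \<forall>g\<in>F. f < g \<longrightarrow> conserved Ps n f g)"

definition max_frontiers :: "int list list \<Rightarrow> nat \<Rightarrow> int \<Rightarrow> int \<Rightarrow> int set" where
  "max_frontiers Ps n a c = \<Union> {F. frontier_set Ps n a c F}"

end

theory Submission
  imports Defs
begin

text \<open>Inside one signed permutation, a conserved interval (a..c) occupies a block of positions
that is traversed monotonically from a to c, forwards if both endpoints are positive and backwards
if both are negative. Measuring positions in that direction, conserved intervals become intervals
of positions, so the union of two overlapping conserved intervals and the difference of two nested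
ones sharing an endpoint are again conserved. Hence if a conserved subinterval (a..c) of I contains
a frontier f, then a and c are linked to both ends of I by conserved intervals and are frontiers
themselves; if it contains no frontier, it lies strictly between two consecutive ones.\<close>

section \<open>Maps sending intervals onto intervals\<close>

lemma interval_image_mono:
  fixes \<pi> :: "'a::linorder \<Rightarrow> 'b::linorder"
  assumes "\<pi> ` {x..z} = {\<pi> x..\<pi> z}" "x \<le> y" "y \<le> z"
  shows "\<pi> x \<le> \<pi> y" "\<pi> y \<le> \<pi> z"
  using assms by (metis atLeastAtMost_iff image_eqI)+

lemma interval_image_overlap:
  fixes \<pi> :: "'a::linorder \<Rightarrow> 'b::linorder"
  assumes xz: "\<pi> ` {x..z} = {\<pi> x..\<pi> z}" and yw: "\<pi> ` {y..w} = {\<pi> y..\<pi> w}"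
    and "x \<le> y" "y \<le> z" "z \<le> w"
  shows "\<pi> ` {x..w} = {\<pi> x..\<pi> w}"
proof -
  note interval_image_mono[OF xz \<open>x \<le> y\<close> \<open>y \<le> z\<close>]
    interval_image_mono[OF yw \<open>y \<le> z\<close> \<open>z \<le> w\<close>]
  moreover have "{x..w} = {x..z} \<union> {y..w}" using assms(3-5) by auto
  ultimately show ?thesis
    using xz yw by (auto simp: image_Un)
qed

lemma interval_image_split_right:
  fixes \<pi> :: "'a::linorder \<Rightarrow> 'b::linorder"
  assumes inj: "inj_on \<pi> {x..z}"
    and xz: "\<pi> ` {x..z} = {\<pi> x..\<pi> z}" and yz: "\<pi> ` {y..z} = {\<pi> y..\<pi> z}"
    and "x \<le> y" "y \<le> z"
  shows "\<pi> ` {x..y} = {\<pi> x..\<pi> y}"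
proof -
  have sub: "{y..z} \<subseteq> {x..z}" "y \<in> {y..z}" using assms(4,5) by auto
  have "{x..y} = {x..z} - ({y..z} - {y})" using assms(4,5) by auto
  then have "\<pi> ` {x..y} = \<pi> ` {x..z} - \<pi> ` ({y..z} - {y})"
    by (simp only:) (rule inj_on_image_set_diff[OF inj]; use sub in blast)
  also have "\<pi> ` ({y..z} - {y}) = \<pi> ` {y..z} - \<pi> ` {y}"
    by (rule inj_on_image_set_diff[OF inj]; use sub in blast)
  also have "\<pi> ` {x..z} - (\<pi> ` {y..z} - \<pi> ` {y}) = {\<pi> x..\<pi> y}"
    using xz yz interval_image_mono[OF xz \<open>x \<le> y\<close> \<open>y \<le> z\<close>] by auto
  finally show ?thesis .
qed

lemma interval_image_split_left:
  fixes \<pi> :: "'a::linorder \<Rightarrow> 'b::linorder"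
  assumes inj: "inj_on \<pi> {x..z}"
    and xz: "\<pi> ` {x..z} = {\<pi> x..\<pi> z}" and xy: "\<pi> ` {x..y} = {\<pi> x..\<pi> y}"
    and "x \<le> y" "y \<le> z"
  shows "\<pi> ` {y..z} = {\<pi> y..\<pi> z}"
proof -
  have sub: "{x..y} \<subseteq> {x..z}" "y \<in> {x..y}" using assms(4,5) by auto
  have "{y..z} = {x..z} - ({x..y} - {y})" using assms(4,5) by auto
  then have "\<pi> ` {y..z} = \<pi> ` {x..z} - \<pi> ` ({x..y} - {y})"
    by (simp only:) (rule inj_on_image_set_diff[OF inj]; use sub in blast)
  also have "\<pi> ` ({x..y} - {y}) = \<pi> ` {x..y} - \<pi> ` {y}"
    by (rule inj_on_image_set_diff[OF inj]; use sub in blast)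
  also have "\<pi> ` {x..z} - (\<pi> ` {x..y} - \<pi> ` {y}) = {\<pi> y..\<pi> z}"
    using xz xy interval_image_mono[OF xz \<open>x \<le> y\<close> \<open>y \<le> z\<close>] by auto
  finally show ?thesis .
qed

section \<open>Conserved intervals inside one signed permutation\<close>

definition position :: "int list \<Rightarrow> int \<Rightarrow> nat" where
  "position P v = the_inv_into {..<length P} (\<lambda>i. \<bar>P ! i\<bar>) v"

lemma abs_nth_image: "(\<lambda>i. \<bar>P ! i\<bar>) ` {..<length P} = abs ` set P"
  by (auto simp: set_conv_nth image_iff)

lemma set_take_drop_eq_image_nth:
  assumes "p + m < length xs"
  shows "set (take (m + 1) (drop p xs)) = (!) xs ` {p..p + m}"
proof -
  have "take (m + 1) (drop p xs) = map ((!) xs) [p..<p + m + 1]"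
    using assms by (intro nth_equalityI) (auto simp del: upt_Suc)
  then show ?thesis by (simp del: upt_Suc add: atLeastLessThanSuc_atLeastAtMost)
qed

definition positive_in :: "int list \<Rightarrow> int \<Rightarrow> bool" where
  "positive_in P v \<longleftrightarrow> 0 < P ! position P v"

text \<open>Positions read against the direction of the permutation are negated, so that a conserved
interval is always mapped onto an increasing interval of oriented positions.\<close>

definition oriented_position :: "int list \<Rightarrow> bool \<Rightarrow> int \<Rightarrow> int" where
  "oriented_position P up v = (if up then int (position P v) else - int (position P v))"

lemma oriented_position_image_iff:
  "oriented_position P up ` A = {oriented_position P up a..oriented_position P up c} \<longleftrightarrow>
    position P ` A = (if up then {position P a..position P c} else {position P c..position P a})"
proof -
  define g :: "nat \<Rightarrow> int" where "g i = (if up then int i else - int i)" for i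
  have g_interval: "{g u..g w} = g ` (if up then {u..w} else {w..u})" for u w
  proof (cases up)
    case True
    then show ?thesis by (simp add: g_def image_int_atLeastAtMost)
  next
    case False
    have "{- int u..- int w} = uminus ` int ` {w..u}"
      by (simp add: image_int_atLeastAtMost)
    with False show ?thesis by (simp add: g_def image_image)
  qed
  have "inj g"
    by (auto simp: inj_on_def g_def)
  moreover have "oriented_position P up ` A = g ` position P ` A"
    by (simp add: image_image g_def oriented_position_def)
  moreover have "{oriented_position P up a..oriented_position P up c}
      = g ` (if up then {position P a..position P c} else {position P c..position P a})"
    using g_interval by (simp add: g_def oriented_position_def)
  ultimately show ?thesis
    by (simp only: inj_image_eq_iff)
qed

context
  fixes P :: "int list"
  assumes distinct_abs: "distinct (map abs P)"
begin

lemma inj_on_abs_nth: "inj_on (\<lambda>i. \<bar>P ! i\<bar>) {..<length P}"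
  using distinct_abs by (auto simp: inj_on_def distinct_conv_nth)

lemma position_less: "v \<in> abs ` set P \<Longrightarrow> position P v < length P"
  using the_inv_into_into[OF inj_on_abs_nth, of v "{..<length P}"]
  unfolding position_def abs_nth_image by simp

lemma abs_nth_position: "v \<in> abs ` set P \<Longrightarrow> \<bar>P ! position P v\<bar> = v"
  unfolding position_def abs_nth_image[symmetric]
  by (rule f_the_inv_into_f[OF inj_on_abs_nth])

lemma position_abs_nth: "i < length P \<Longrightarrow> position P \<bar>P ! i\<bar> = i"
  unfolding position_def by (rule the_inv_into_f_f[OF inj_on_abs_nth]) simp

lemma inj_on_position: "inj_on (position P) (abs ` set P)"
  unfolding position_def abs_nth_image[symmetric]
  by (rule inj_on_the_inv_into[OF inj_on_abs_nth])

lemma abs_nth_image_eq_iff: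
  assumes I: "I \<subseteq> {..<length P}"
  shows "(\<lambda>i. \<bar>P ! i\<bar>) ` I = V \<longleftrightarrow> V \<subseteq> abs ` set P \<and> position P ` V = I"
proof
  assume V: "(\<lambda>i. \<bar>P ! i\<bar>) ` I = V"
  have "V \<subseteq> abs ` set P"
    unfolding V[symmetric] abs_nth_image[symmetric] using I by (rule image_mono)
  moreover have "position P ` V = I"
    unfolding V[symmetric] image_image using I position_abs_nth by (simp add: subset_iff)
  ultimately show "V \<subseteq> abs ` set P \<and> position P ` V = I" ..
next
  assume "V \<subseteq> abs ` set P \<and> position P ` V = I"
  then show "(\<lambda>i. \<bar>P ! i\<bar>) ` I = V"
    using abs_nth_position by (auto simp: image_image subset_iff)
qed

lemma conserved_in_iff_segment:
  assumes "a \<le> c"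
  shows "conserved_in P a c \<longleftrightarrow> (\<exists>p e. e < length P \<and> (\<lambda>i. \<bar>P ! i\<bar>) ` {p..e} = {a..c}
           \<and> ((P ! p = a \<and> P ! e = c) \<or> (P ! p = - c \<and> P ! e = - a)))"
proof
  assume "conserved_in P a c"
  then obtain p where p: "p + nat (c - a) < length P"
    and seg: "abs ` set (take (nat (c - a) + 1) (drop p P)) = {a..c}"
    and ends: "(P ! p = a \<and> P ! (p + nat (c - a)) = c) \<or> (P ! p = - c \<and> P ! (p + nat (c - a)) = - a)"
    unfolding conserved_in_def by blast
  have "(\<lambda>i. \<bar>P ! i\<bar>) ` {p..p + nat (c - a)} = {a..c}"
    using seg unfolding set_take_drop_eq_image_nth[OF p] image_image .
  with p ends show "\<exists>p e. e < length P \<and> (\<lambda>i. \<bar>P ! i\<bar>) ` {p..e} = {a..c}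
           \<and> ((P ! p = a \<and> P ! e = c) \<or> (P ! p = - c \<and> P ! e = - a))" by blast
next
  assume "\<exists>p e. e < length P \<and> (\<lambda>i. \<bar>P ! i\<bar>) ` {p..e} = {a..c}
           \<and> ((P ! p = a \<and> P ! e = c) \<or> (P ! p = - c \<and> P ! e = - a))"
  then obtain p e where e: "e < length P" and seg: "(\<lambda>i. \<bar>P ! i\<bar>) ` {p..e} = {a..c}"
    and ends: "(P ! p = a \<and> P ! e = c) \<or> (P ! p = - c \<and> P ! e = - a)"
    by blast
  have "inj_on (\<lambda>i. \<bar>P ! i\<bar>) {p..e}"
    using e by (auto intro: inj_on_subset[OF inj_on_abs_nth])
  then have "card {p..e} = card {a..c}"
    using seg card_image by fastforce
  then have e_eq: "e = p + nat (c - a)"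
    using assms by simp
  have "abs ` set (take (nat (c - a) + 1) (drop p P)) = {a..c}"
    using e seg unfolding e_eq set_take_drop_eq_image_nth[OF e[unfolded e_eq]] image_image by simp
  with e ends show "conserved_in P a c"
    unfolding conserved_in_def e_eq by blast
qed

lemma conserved_in_iff_positions:
  assumes "a \<le> c"
  shows "conserved_in P a c \<longleftrightarrow> {a..c} \<subseteq> abs ` set P \<and>
    ((P ! position P a = a \<and> P ! position P c = c \<and> position P ` {a..c} = {position P a..position P c})
     \<or> (P ! position P a = - a \<and> P ! position P c = - c \<and> position P ` {a..c} = {position P c..position P a}))"
    (is "_ \<longleftrightarrow> ?vals \<and> (?up \<or> ?down)")
proof
  assume "conserved_in P a c"
  then obtain p e where e: "e < length P" and seg: "(\<lambda>i. \<bar>P ! i\<bar>) ` {p..e} = {a..c}"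
    and ends: "(P ! p = a \<and> P ! e = c) \<or> (P ! p = - c \<and> P ! e = - a)"
    using conserved_in_iff_segment[OF assms] by blast
  have "{p..e} \<subseteq> {..<length P}" using e by auto
  then have vals: ?vals and pos: "position P ` {a..c} = {p..e}"
    using seg abs_nth_image_eq_iff by blast+
  have "{p..e} \<noteq> {}" using seg assms by auto
  then have p: "p < length P" using e by simp
  have "a \<in> abs ` set P" "c \<in> abs ` set P" using vals assms by auto
  then have nonneg: "0 \<le> a" "0 \<le> c" by auto
  from ends have "?up \<or> ?down"
  proof
    assume ends_up: "P ! p = a \<and> P ! e = c"
    then have "position P a = p" "position P c = e"
      using position_abs_nth[OF p] position_abs_nth[OF e] nonneg by simp_all
    then show ?thesis using pos ends_up by simp
  next
    assume ends_down: "P ! p = - c \<and> P ! e = - a"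
    then have "position P c = p" "position P a = e"
      using position_abs_nth[OF p] position_abs_nth[OF e] nonneg by simp_all
    then show ?thesis using pos ends_down by simp
  qed
  with vals show "?vals \<and> (?up \<or> ?down)" ..
next
  assume "?vals \<and> (?up \<or> ?down)"
  then have vals: ?vals and up_down: "?up \<or> ?down" by (rule conjunct1, rule conjunct2)
  have pa: "position P a < length P" and pc: "position P c < length P"
    using position_less vals assms by auto
  from up_down show "conserved_in P a c"
  proof
    assume up: ?up
    have "{position P a..position P c} \<subseteq> {..<length P}" using pc by auto
    then have "(\<lambda>i. \<bar>P ! i\<bar>) ` {position P a..position P c} = {a..c}"
      using abs_nth_image_eq_iff vals up by simp
    then show ?thesis
      unfolding conserved_in_iff_segment[OF assms] using pc up by blast
  next
    assume down: ?down
    have "{position P c..position P a} \<subseteq> {..<length P}" using pa by auto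
    then have "(\<lambda>i. \<bar>P ! i\<bar>) ` {position P c..position P a} = {a..c}"
      using abs_nth_image_eq_iff vals down by simp
    then show ?thesis
      unfolding conserved_in_iff_segment[OF assms] using pa down by blast
  qed
qed

context
  assumes zero_free: "0 \<notin> set P"
begin

lemma positive_in_iff:
  assumes "v \<in> abs ` set P"
  shows "P ! position P v = v \<longleftrightarrow> positive_in P v" and "P ! position P v = - v \<longleftrightarrow> \<not> positive_in P v"
proof -
  have "P ! position P v \<noteq> 0"
    using zero_free nth_mem[OF position_less[OF assms]] by auto
  then show "P ! position P v = v \<longleftrightarrow> positive_in P v" "P ! position P v = - v \<longleftrightarrow> \<not> positive_in P v"
    using abs_nth_position[OF assms] unfolding positive_in_def by auto
qed

lemma conserved_in_iff_oriented:
  assumes "a \<le> c"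
  shows "conserved_in P a c \<longleftrightarrow> {a..c} \<subseteq> abs ` set P \<and> positive_in P c = positive_in P a
    \<and> oriented_position P (positive_in P a) ` {a..c}
        = {oriented_position P (positive_in P a) a..oriented_position P (positive_in P a) c}"
proof (cases "{a..c} \<subseteq> abs ` set P")
  case True
  then have "a \<in> abs ` set P" "c \<in> abs ` set P" using assms by auto
  then show ?thesis
    unfolding conserved_in_iff_positions[OF assms] oriented_position_image_iff
    using True positive_in_iff by auto
next
  case False
  then show ?thesis unfolding conserved_in_iff_positions[OF assms] by blast
qed

lemma oriented_position_eq_iff:
  assumes "u \<in> abs ` set P" "v \<in> abs ` set P"
  shows "oriented_position P up u = oriented_position P up v \<longleftrightarrow> u = v"
  using inj_on_position assms by (auto simp: oriented_position_def dest: inj_onD)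

lemma inj_on_oriented_position: "inj_on (oriented_position P up) (abs ` set P)"
  using oriented_position_eq_iff by (auto intro: inj_onI)

lemma conserved_in_overlap:
  assumes xz: "conserved_in P x z" and yw: "conserved_in P y w"
    and "x \<le> y" "y \<le> z" "z \<le> w"
  shows "conserved_in P x w"
proof -
  let ?s = "positive_in P x" and ?t = "positive_in P y"
  have vals_xz: "{x..z} \<subseteq> abs ` set P" and sz: "positive_in P z = ?s"
    and block_xz: "oriented_position P ?s ` {x..z} = {oriented_position P ?s x..oriented_position P ?s z}"
    using xz conserved_in_iff_oriented assms(3,4) by auto
  have vals_yw: "{y..w} \<subseteq> abs ` set P" and tw: "positive_in P w = ?t"
    and block_yw: "oriented_position P ?t ` {y..w} = {oriented_position P ?t y..oriented_position P ?t w}"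
    using yw conserved_in_iff_oriented assms(4,5) by auto
  have "?t = ?s"
  proof (rule ccontr)
    assume "?t \<noteq> ?s"
    have "oriented_position P ?s y \<le> oriented_position P ?s z"
      using interval_image_mono(2)[OF block_xz assms(3,4)] .
    moreover have "oriented_position P ?t y \<le> oriented_position P ?t z"
      using interval_image_mono(1)[OF block_yw assms(4,5)] .
    ultimately have "position P y = position P z"
      using \<open>?t \<noteq> ?s\<close> by (auto simp: oriented_position_def split: if_splits)
    moreover have "y \<in> abs ` set P" "z \<in> abs ` set P"
      using vals_yw assms(4,5) by auto
    ultimately have "y = z"
      by (rule inj_onD[OF inj_on_position])
    then show False
      using \<open>?t \<noteq> ?s\<close> sz by simp
  qed
  then have "oriented_position P ?s ` {x..w} = {oriented_position P ?s x..oriented_position P ?s w}"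
    using interval_image_overlap[OF block_xz _ assms(3-5)] block_yw by simp
  moreover have "{x..w} = {x..z} \<union> {y..w}"
    using assms(3-5) by auto
  ultimately show ?thesis
    using conserved_in_iff_oriented vals_xz vals_yw assms tw \<open>?t = ?s\<close> by auto
qed

lemma conserved_in_split_right:
  assumes xz: "conserved_in P x z" and yz: "conserved_in P y z" and "x \<le> y" "y \<le> z"
  shows "conserved_in P x y"
proof -
  let ?s = "positive_in P x"
  have vals: "{x..z} \<subseteq> abs ` set P" and sz: "positive_in P z = ?s"
    and block_xz: "oriented_position P ?s ` {x..z} = {oriented_position P ?s x..oriented_position P ?s z}"
    using xz conserved_in_iff_oriented assms(3,4) by auto
  have sy: "positive_in P y = ?s"
    and block_yz: "oriented_position P ?s ` {y..z} = {oriented_position P ?s y..oriented_position P ?s z}"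
    using yz conserved_in_iff_oriented assms(4) sz by auto
  have "inj_on (oriented_position P ?s) {x..z}"
    using inj_on_oriented_position vals by (rule inj_on_subset)
  then have "oriented_position P ?s ` {x..y} = {oriented_position P ?s x..oriented_position P ?s y}"
    using interval_image_split_right block_xz block_yz assms(3,4) by blast
  then show ?thesis
    using conserved_in_iff_oriented vals sy assms(3,4) by auto
qed

lemma conserved_in_split_left:
  assumes xz: "conserved_in P x z" and xy: "conserved_in P x y" and "x \<le> y" "y \<le> z"
  shows "conserved_in P y z"
proof -
  let ?s = "positive_in P x"
  have vals: "{x..z} \<subseteq> abs ` set P" and sz: "positive_in P z = ?s"
    and block_xz: "oriented_position P ?s ` {x..z} = {oriented_position P ?s x..oriented_position P ?s z}"
    using xz conserved_in_iff_oriented assms(3,4) by auto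
  have sy: "positive_in P y = ?s"
    and block_xy: "oriented_position P ?s ` {x..y} = {oriented_position P ?s x..oriented_position P ?s y}"
    using xy conserved_in_iff_oriented assms(3) by auto
  have "inj_on (oriented_position P ?s) {x..z}"
    using inj_on_oriented_position vals by (rule inj_on_subset)
  then have "oriented_position P ?s ` {y..z} = {oriented_position P ?s y..oriented_position P ?s z}"
    using interval_image_split_left block_xz block_xy assms(3,4) by blast
  then show ?thesis
    using conserved_in_iff_oriented vals sy sz assms(3,4) by auto
qed

end

end

section \<open>Conserved intervals of a family and maximal frontiers\<close>

lemma signed_perm_distinct_abs_zero_free:
  "signed_perm n P \<Longrightarrow> distinct (map abs P) \<and> 0 \<notin> set P"
  unfolding signed_perm_def by (metis atLeastAtMost_iff abs_zero image_eqI set_map zero_less_one not_le)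

text \<open>Admitting the trivial case \<open>x = y\<close> lets the closure properties hold without side
conditions; conserved singletons additionally require \<open>1 \<le> x \<le> n\<close>.\<close>

definition weakly_conserved :: "int list list \<Rightarrow> nat \<Rightarrow> int \<Rightarrow> int \<Rightarrow> bool" where
  "weakly_conserved Ps n x y \<longleftrightarrow> x = y \<or> conserved Ps n x y"

lemma weakly_conserved_le: "weakly_conserved Ps n x y \<Longrightarrow> x \<le> y"
  by (auto simp: weakly_conserved_def conserved_def)

lemma weakly_conserved_refl: "weakly_conserved Ps n x x"
  by (simp add: weakly_conserved_def)

lemma weakly_conserved_iff_conserved_in:
  "x < y \<Longrightarrow> weakly_conserved Ps n x y \<longleftrightarrow> (\<forall>P\<in>set Ps. conserved_in P x y)"
  by (auto simp: weakly_conserved_def conserved_def)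

lemma finite_max_frontiers: "finite (max_frontiers Ps n a0 c0)"
  unfolding max_frontiers_def frontier_set_def by (rule finite_subset[of _ "{a0..c0}"]) auto

lemma mem_max_frontiers_iff:
  assumes "conserved Ps n a0 c0"
  shows "f \<in> max_frontiers Ps n a0 c0 \<longleftrightarrow> weakly_conserved Ps n a0 f \<and> weakly_conserved Ps n f c0"
proof
  assume "f \<in> max_frontiers Ps n a0 c0"
  then obtain F where F: "frontier_set Ps n a0 c0 F" and "f \<in> F"
    unfolding max_frontiers_def by blast
  then have "a0 \<in> F" "c0 \<in> F" "a0 \<le> f" "f \<le> c0"
    and pairs: "\<And>g h. g \<in> F \<Longrightarrow> h \<in> F \<Longrightarrow> g < h \<Longrightarrow> conserved Ps n g h"
    unfolding frontier_set_def by auto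
  then show "weakly_conserved Ps n a0 f \<and> weakly_conserved Ps n f c0"
    using \<open>f \<in> F\<close> unfolding weakly_conserved_def by fastforce
next
  assume "weakly_conserved Ps n a0 f \<and> weakly_conserved Ps n f c0"
  then have "a0 \<le> f" "f \<le> c0" "a0 < f \<Longrightarrow> conserved Ps n a0 f" "f < c0 \<Longrightarrow> conserved Ps n f c0"
    using weakly_conserved_le unfolding weakly_conserved_def by auto
  with assms have "frontier_set Ps n a0 c0 {a0, f, c0}"
    unfolding frontier_set_def by auto
  then show "f \<in> max_frontiers Ps n a0 c0"
    unfolding max_frontiers_def by blast
qed

lemma ends_mem_max_frontiers:
  assumes "conserved Ps n a0 c0"
  shows "a0 \<in> max_frontiers Ps n a0 c0" "c0 \<in> max_frontiers Ps n a0 c0"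
  using mem_max_frontiers_iff[OF assms] assms weakly_conserved_refl
  by (auto simp: weakly_conserved_def)

context
  fixes Ps :: "int list list" and n :: nat
  assumes perms: "\<forall>P\<in>set Ps. distinct (map abs P) \<and> 0 \<notin> set P"
begin

lemma weakly_conserved_overlap:
  assumes "weakly_conserved Ps n x z" "weakly_conserved Ps n y w" "x \<le> y" "y \<le> z" "z \<le> w"
  shows "weakly_conserved Ps n x w"
proof (cases "x < z \<and> y < w")
  case True
  have "conserved_in P x w" if "P \<in> set Ps" for P
  proof -
    have xz: "conserved_in P x z" and yw: "conserved_in P y w"
      using assms(1,2) True that by (auto simp: weakly_conserved_iff_conserved_in)
    show ?thesis
      using conserved_in_overlap[OF _ _ xz yw assms(3-5)] perms that by blast
  qed
  then show ?thesis
    using True assms(5) by (simp add: weakly_conserved_iff_conserved_in)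
next
  case False
  then show ?thesis
    using assms weakly_conserved_le by force
qed

lemma weakly_conserved_split_right:
  assumes "weakly_conserved Ps n x z" "weakly_conserved Ps n y z" "x \<le> y" "y \<le> z"
  shows "weakly_conserved Ps n x y"
proof (cases "x < y \<and> y < z")
  case True
  have "conserved_in P x y" if "P \<in> set Ps" for P
  proof -
    have xz: "conserved_in P x z" and yz: "conserved_in P y z"
      using assms(1,2) True that by (auto simp: weakly_conserved_iff_conserved_in)
    show ?thesis
      using conserved_in_split_right[OF _ _ xz yz assms(3,4)] perms that by blast
  qed
  then show ?thesis
    using True by (simp add: weakly_conserved_iff_conserved_in)
next
  case False
  then show ?thesis
    using assms weakly_conserved_refl by force
qed

lemma weakly_conserved_split_left:
  assumes "weakly_conserved Ps n x z" "weakly_conserved Ps n x y" "x \<le> y" "y \<le> z"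
  shows "weakly_conserved Ps n y z"
proof (cases "x < y \<and> y < z")
  case True
  have "conserved_in P y z" if "P \<in> set Ps" for P
  proof -
    have xz: "conserved_in P x z" and xy: "conserved_in P x y"
      using assms(1,2) True that by (auto simp: weakly_conserved_iff_conserved_in)
    show ?thesis
      using conserved_in_split_left[OF _ _ xz xy assms(3,4)] perms that by blast
  qed
  then show ?thesis
    using True by (simp add: weakly_conserved_iff_conserved_in)
next
  case False
  then show ?thesis
    using assms weakly_conserved_refl by force
qed

lemma max_frontiers_interval_endpoints:
  assumes I: "conserved Ps n a0 c0" and ac: "weakly_conserved Ps n a c"
    and "a0 \<le> a" "c \<le> c0"
    and f: "f \<in> max_frontiers Ps n a0 c0" "a \<le> f" "f \<le> c"
  shows "a \<in> max_frontiers Ps n a0 c0" "c \<in> max_frontiers Ps n a0 c0"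
proof -
  have a0f: "weakly_conserved Ps n a0 f" and fc0: "weakly_conserved Ps n f c0"
    using f(1) mem_max_frontiers_iff[OF I] by auto
  have "f \<le> c0" using weakly_conserved_le[OF fc0] .
  have a0c: "weakly_conserved Ps n a0 c"
    using weakly_conserved_overlap[OF a0f ac] assms(3) f(2,3) .
  have a0a: "weakly_conserved Ps n a0 a"
    using weakly_conserved_split_right[OF a0c ac] assms(3) ac weakly_conserved_le by blast
  have af: "weakly_conserved Ps n a f"
    using weakly_conserved_split_left[OF a0f a0a] assms(3) f(2) .
  have ac0: "weakly_conserved Ps n a c0"
    using weakly_conserved_overlap[OF af fc0] f(2) \<open>f \<le> c0\<close> by simp
  have cc0: "weakly_conserved Ps n c c0"
    using weakly_conserved_split_left[OF ac0 ac] weakly_conserved_le[OF ac] assms(4) .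
  show "a \<in> max_frontiers Ps n a0 c0" "c \<in> max_frontiers Ps n a0 c0"
    using a0a ac0 a0c cc0 mem_max_frontiers_iff[OF I] by auto
qed

end

lemma sorted_list_of_set_indices:
  fixes S :: "'a::linorder set"
  assumes "finite S" "x \<in> S" "y \<in> S" "x \<le> y"
  shows "\<exists>i j. i \<le> j \<and> j < length (sorted_list_of_set S)
    \<and> sorted_list_of_set S ! i = x \<and> sorted_list_of_set S ! j = y"
proof -
  let ?xs = "sorted_list_of_set S"
  obtain i j where i: "i < length ?xs" "?xs ! i = x" and j: "j < length ?xs" "?xs ! j = y"
    using assms(1-3) by (metis in_set_conv_nth set_sorted_list_of_set)
  have "i \<le> j"
  proof (rule ccontr)
    assume "\<not> i \<le> j"
    then have "?xs ! j < ?xs ! i"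
      using sorted_wrt_nth_less[OF strict_sorted_list_of_set] i(1) by (simp add: not_le)
    with i j assms(4) show False by simp
  qed
  with i j show ?thesis by blast
qed

lemma sorted_list_of_set_gap:
  fixes S :: "'a::linorder set"
  assumes "finite S" "s \<in> S" "s < a" "t \<in> S" "c < t" "a \<le> c"
    and gap: "\<forall>x\<in>S. \<not> (a \<le> x \<and> x \<le> c)"
  shows "\<exists>i. i + 1 < length (sorted_list_of_set S)
    \<and> sorted_list_of_set S ! i < a \<and> c < sorted_list_of_set S ! (i + 1)"
proof -
  let ?xs = "sorted_list_of_set S"
  have less: "?xs ! i < ?xs ! j" if "i < j" "j < length ?xs" for i j
    using sorted_wrt_nth_less[OF strict_sorted_list_of_set that] .
  define g where "g = Max {x \<in> S. x < a}"
  have "g \<in> {x \<in> S. x < a}"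
    unfolding g_def using assms(1-3) by (intro Max_in) auto
  then have "g \<in> S" "g < a" by simp_all
  have g_max: "x \<le> g" if "x \<in> S" "x < a" for x
    using Max_ge[of "{x \<in> S. x < a}" x] assms(1) that unfolding g_def by simp
  obtain i where i: "i < length ?xs" "?xs ! i = g"
    using \<open>g \<in> S\<close> assms(1) by (metis in_set_conv_nth set_sorted_list_of_set)
  obtain k where k: "k < length ?xs" "?xs ! k = t"
    using assms(1,4) by (metis in_set_conv_nth set_sorted_list_of_set)
  have "g < t"
    using \<open>g < a\<close> assms(5,6) by simp
  then have "i < k"
    using less[of k i] i k by (metis less_asym nat_neq_iff)
  then have i1: "i + 1 < length ?xs"
    using k by simp
  have "?xs ! (i + 1) \<in> S"
    using i1 assms(1) nth_mem set_sorted_list_of_set by blast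
  moreover have "g < ?xs ! (i + 1)"
    using less[of i "i + 1"] i1 i by simp
  ultimately have "c < ?xs ! (i + 1)"
    using g_max gap by (meson not_le)
  with i i1 \<open>g < a\<close> show ?thesis by auto
qed

theorem lemma9:
  fixes n :: nat and Ps :: "int list list" and a0 c0 a c :: int
  assumes "n \<ge> 2"
    and "Ps \<noteq> []"
    and "hd Ps = map int [1..<n+1]"
    and "\<forall>P\<in>set Ps. signed_perm n P \<and> hd P = 1 \<and> last P = int n"
    and "conserved Ps n a0 c0"
    and "conserved Ps n a c"
    and "{a..c} \<subseteq> {a0..c0}"
  shows "let fs = sorted_list_of_set (max_frontiers Ps n a0 c0) in
    ((\<exists>l < length fs. a \<le> fs ! l \<and> fs ! l \<le> c)
       \<and> (\<exists>i j. i \<le> j \<and> j < length fs \<and> {a..c} = {fs ! i..fs ! j}))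
    \<or> (\<not> (\<exists>l < length fs. a \<le> fs ! l \<and> fs ! l \<le> c)
       \<and> (\<exists>i. i + 1 < length fs \<and> fs ! i < a \<and> a \<le> c \<and> c < fs ! (i + 1)))"
proof -
  have perms: "\<forall>P\<in>set Ps. distinct (map abs P) \<and> 0 \<notin> set P"
    using assms(4) signed_perm_distinct_abs_zero_free by blast
  define F where "F = max_frontiers Ps n a0 c0"
  define fs where "fs = sorted_list_of_set F"
  have "finite F"
    unfolding F_def by (rule finite_max_frontiers)
  have ac: "weakly_conserved Ps n a c"
    using assms(6) by (simp add: weakly_conserved_def)
  then have "a \<le> c" "a0 \<le> a" "c \<le> c0"
    using weakly_conserved_le assms(7) by auto
  have "a0 \<in> F" "c0 \<in> F"
    using ends_mem_max_frontiers[OF assms(5)] unfolding F_def by auto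
  have hit_iff: "(\<exists>l < length fs. a \<le> fs ! l \<and> fs ! l \<le> c) \<longleftrightarrow> (\<exists>f\<in>F. a \<le> f \<and> f \<le> c)"
    unfolding fs_def using \<open>finite F\<close> by (metis in_set_conv_nth set_sorted_list_of_set)
  have "(\<exists>f\<in>F. a \<le> f \<and> f \<le> c) \<and> (\<exists>i j. i \<le> j \<and> j < length fs \<and> {a..c} = {fs ! i..fs ! j})
    \<or> \<not> (\<exists>f\<in>F. a \<le> f \<and> f \<le> c) \<and> (\<exists>i. i + 1 < length fs \<and> fs ! i < a \<and> a \<le> c \<and> c < fs ! (i + 1))"
  proof (cases "\<exists>f\<in>F. a \<le> f \<and> f \<le> c")
    case True
    then obtain f where "f \<in> F" "a \<le> f" "f \<le> c" by blast
    then have "a \<in> F" "c \<in> F"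
      using max_frontiers_interval_endpoints[OF perms assms(5) ac \<open>a0 \<le> a\<close> \<open>c \<le> c0\<close>]
      unfolding F_def by auto
    then have "\<exists>i j. i \<le> j \<and> j < length fs \<and> {a..c} = {fs ! i..fs ! j}"
      using sorted_list_of_set_indices[OF \<open>finite F\<close>] \<open>a \<le> c\<close> unfolding fs_def by metis
    with True show ?thesis by blast
  next
    case False
    then have "a0 < a" "c < c0"
      using \<open>a0 \<in> F\<close> \<open>c0 \<in> F\<close> \<open>a0 \<le> a\<close> \<open>c \<le> c0\<close> \<open>a \<le> c\<close> by force+
    then have "\<exists>i. i + 1 < length fs \<and> fs ! i < a \<and> c < fs ! (i + 1)"
      using sorted_list_of_set_gap[OF \<open>finite F\<close> \<open>a0 \<in> F\<close> _ \<open>c0 \<in> F\<close>] False \<open>a \<le> c\<close>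
      unfolding fs_def by blast
    with False \<open>a \<le> c\<close> show ?thesis by blast
  qed
  then show ?thesis
    unfolding Let_def F_def[symmetric] fs_def[symmetric] hit_iff .
qed

end
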